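(* For all $Y,Z\in\mathbb{N}^\mathbb{N}$, the following are equivalent: (1) $Y=\mathcal{J}(Z)$; (2) for every $n$ there exists a finite string $\sigma_n\subset Z$ with $|\sigma_n|>n$ such that $Y\restriction n=J(\sigma_n)$.
   Context: Finite strings of natural numbers are coded by natural numbers via a fixed computable coding in which $\sigma\subsetneq\tau$ implies that the code of $\sigma$ is less than that of $\tau$; thus strings may be entries of other strings. For $\sigma$ a finite or infinite sequence, $\{e\}^\sigma_t(n)\downarrow$ means the $e$-th Turing machine on input $n$ with oracle $\sigma$ halts in fewer than $\min(|\sigma|,t)$ steps ($|\sigma|=\infty$ for infinite $\sigma$). For $Z\in\mathbb{N}^\mathbb{N}$, set $t_{-1}=1$ and $t_n=\max\{t_{n-1}+1,\ \mu t(\{n\}^Z_t(n)\downarrow)\}$, where $t_n=t_{n-1}+1$ if no such $t$ exists; then $\mathcal{J}(Z)\in\mathbb{N}^\mathbb{N}$ is defined by $\mathcal{J}(Z)(n)=Z\restriction t_n$. For a finite string $\sigma$, set $t_{-1}=1$ and $t_n=\max\{t_{n-1}+1,\ \mu t(\{n\}^{\sigma\restriction t}(n)\downarrow)\}$ (with $t_n=t_{n-1}+1$ if no such $t$), where $\{n\}^{\tau}(n)\downarrow$ means halting in fewer than $|\tau|$ steps and $\sigma\restriction t$ is the initial segment of length $\min(t,|\sigma|)$; then $J(\sigma)=\langle\sigma\restriction t_0,\dots,\sigma\restriction t_{k-1}\rangle$ where $k$ is least with $t_k>|\sigma|$. $Y\restriction n$ denotes the initial segment of $Y$ of length $n$.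 *)

theory Defs
  imports Main "HOL-Library.Nat_Bijection"
begin

text \<open>Strings are lists. The code of a string is list_encode of its reversal, so a
proper extension has a strictly larger code (prod_encode (a,b) is at least b).\<close>

definition str_code :: "nat list \<Rightarrow> nat" where
  "str_code s = list_encode (rev s)"

definition init_seg :: "(nat \<Rightarrow> nat) \<Rightarrow> nat \<Rightarrow> nat list" where
  "init_seg Z n = map Z [0..<n]"

definition is_prefix_of :: "nat list \<Rightarrow> (nat \<Rightarrow> nat) \<Rightarrow> bool" where
  "is_prefix_of s Z \<longleftrightarrow> (\<forall>i < length s. s ! i = Z i)"

text \<open>A concrete machine model: register machines with a one-way-readable oracle tape
whose head moves one cell per step (so a computation of fewer than t steps only
inspects oracle cells below t).  Reading an oracle cell that does not exist (beyond
a finite oracle) makes the computation get stuck (never halts).\<close>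

datatype instr = Inc nat | Dec nat | Jz nat nat | OLeft | ORight | ORead nat

type_synonym config = "nat \<times> (nat \<Rightarrow> nat) \<times> nat"  (* pc, registers, oracle head *)

definition decode_instr :: "nat \<Rightarrow> instr" where
  "decode_instr k = (let q = k div 6 in
     (case k mod 6 of
        0 \<Rightarrow> Inc q
      | Suc 0 \<Rightarrow> Dec q
      | Suc (Suc 0) \<Rightarrow> Jz (fst (prod_decode q)) (snd (prod_decode q))
      | Suc (Suc (Suc 0)) \<Rightarrow> OLeft
      | Suc (Suc (Suc (Suc 0))) \<Rightarrow> ORight
      | _ \<Rightarrow> ORead q))"

definition prog :: "nat \<Rightarrow> instr list" where
  "prog e = map decode_instr (list_decode e)"

definition halted :: "instr list \<Rightarrow> config \<Rightarrow> bool" where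
  "halted p c \<longleftrightarrow> fst c \<ge> length p"

fun exec :: "instr \<Rightarrow> (nat \<Rightarrow> nat option) \<Rightarrow> config \<Rightarrow> config option" where
  "exec (Inc r) orc (pc, R, h) = Some (Suc pc, R(r := Suc (R r)), h)"
| "exec (Dec r) orc (pc, R, h) = Some (Suc pc, R(r := R r - 1), h)"
| "exec (Jz r l) orc (pc, R, h) = Some (if R r = 0 then l else Suc pc, R, h)"
| "exec OLeft orc (pc, R, h) = Some (Suc pc, R, h - 1)"
| "exec ORight orc (pc, R, h) = Some (Suc pc, R, Suc h)"
| "exec (ORead r) orc (pc, R, h) =
     (case orc h of None \<Rightarrow> None | Some v \<Rightarrow> Some (Suc pc, R(r := v), h))"

definition step :: "instr list \<Rightarrow> (nat \<Rightarrow> nat option) \<Rightarrow> config \<Rightarrow> config option" where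
  "step p orc c = (if halted p c then Some c else exec (p ! fst c) orc c)"

fun run :: "instr list \<Rightarrow> (nat \<Rightarrow> nat option) \<Rightarrow> nat \<Rightarrow> nat \<Rightarrow> config option" where
  "run p orc x 0 = Some (0, (\<lambda>r. if r = 0 then x else 0), 0)"
| "run p orc x (Suc k) = (case run p orc x k of None \<Rightarrow> None | Some c \<Rightarrow> step p orc c)"

definition halts_lt :: "nat \<Rightarrow> (nat \<Rightarrow> nat option) \<Rightarrow> nat \<Rightarrow> nat \<Rightarrow> bool" where
  "halts_lt e orc x s \<longleftrightarrow> (\<exists>k < s. \<exists>c. run (prog e) orc x k = Some c \<and> halted (prog e) c)"

definition inf_oracle :: "(nat \<Rightarrow> nat) \<Rightarrow> nat \<Rightarrow> nat option" where
  "inf_oracle Z = (\<lambda>h. Some (Z h))"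

definition fin_oracle :: "nat list \<Rightarrow> nat \<Rightarrow> nat option" where
  "fin_oracle s = (\<lambda>h. if h < length s then Some (s ! h) else None)"

definition halts_inf :: "nat \<Rightarrow> (nat \<Rightarrow> nat) \<Rightarrow> nat \<Rightarrow> nat \<Rightarrow> bool" where
  "halts_inf e Z t x \<longleftrightarrow> halts_lt e (inf_oracle Z) x t"

definition halts_fin :: "nat \<Rightarrow> nat list \<Rightarrow> nat \<Rightarrow> bool" where
  "halts_fin e s x \<longleftrightarrow> halts_lt e (fin_oracle s) x (length s)"

text \<open>tseq P 0 = t_{-1} = 1 and tseq P (Suc n) = t_n, where P n t says that the n-th
machine on input n halts at stage t.\<close>
fun tseq :: "(nat \<Rightarrow> nat \<Rightarrow> bool) \<Rightarrow> nat \<Rightarrow> nat" where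
  "tseq P 0 = 1"
| "tseq P (Suc n) = (if \<exists>t. P n t then max (tseq P n + 1) (LEAST t. P n t) else tseq P n + 1)"

definition tZ :: "(nat \<Rightarrow> nat) \<Rightarrow> nat \<Rightarrow> nat" where
  "tZ Z n = tseq (\<lambda>m t. halts_inf m Z t m) (Suc n)"

definition JJ :: "(nat \<Rightarrow> nat) \<Rightarrow> nat \<Rightarrow> nat" where
  "JJ Z n = str_code (init_seg Z (tZ Z n))"

definition tS :: "nat list \<Rightarrow> nat \<Rightarrow> nat" where
  "tS s n = tseq (\<lambda>m t. halts_fin m (take t s) m) (Suc n)"

definition Jfin :: "nat list \<Rightarrow> nat list" where
  "Jfin s = (let k = (LEAST k. tS s k > length s) in
             map (\<lambda>i. str_code (take (tS s i) s)) [0..<k])"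

end

theory Submission
  imports Defs
begin

text \<open>A machine running for fewer than t steps only reads oracle cells below t, so for a
  prefix \<sigma> of Z the finite and the infinite halting predicates agree at every stage up to |\<sigma>|.
  Hence the stages computed from \<sigma> coincide with t_0 < t_1 < ... computed from Z as long as the
  latter stay \<le> |\<sigma>|.  For \<sigma> = Z|t_(n-1) the next stage computed from \<sigma> exceeds |\<sigma>|, so
  J(\<sigma>) = JJ Z|n; conversely, if |\<sigma>| > t_m and J(\<sigma>) has length t_m > m, its m-th entry
  is Z|t_m.\<close>

text \<open>tseq_inf Z n is t_(n-1) of the paper, tZ Z n is t_n.\<close>

abbreviation tseq_inf :: "(nat \<Rightarrow> nat) \<Rightarrow> nat \<Rightarrow> nat" where
  "tseq_inf Z \<equiv> tseq (\<lambda>m t. halts_inf m Z t m)"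

abbreviation tseq_fin :: "nat list \<Rightarrow> nat \<Rightarrow> nat" where
  "tseq_fin s \<equiv> tseq (\<lambda>m t. halts_fin m (take t s) m)"

lemma run_head_le: "run p orc x k = Some (pc, R, h) \<Longrightarrow> h \<le> k"
proof (induction k arbitrary: pc R h)
  case 0
  then show ?case by simp
next
  case (Suc k)
  then obtain pc' R' h' where prev: "run p orc x k = Some (pc', R', h')"
    and stp: "step p orc (pc', R', h') = Some (pc, R, h)"
    by (auto split: option.splits)
  have "h \<le> Suc h'"
    using stp by (auto simp: step_def split: if_splits; cases "p ! pc'"; auto split: option.splits)
  with Suc.IH[OF prev] show ?case by simp
qed

lemma run_cong_oracle: "(\<And>h. h < k \<Longrightarrow> o1 h = o2 h) \<Longrightarrow> run p o1 x k = run p o2 x k"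
proof (induction k)
  case 0
  then show ?case by simp
next
  case (Suc k)
  then have IH: "run p o1 x k = run p o2 x k" by simp
  show ?case
  proof (cases "run p o1 x k")
    case None
    then show ?thesis using IH by simp
  next
    case (Some c)
    obtain pc R h where c: "c = (pc, R, h)" by (cases c)
    have "o1 h = o2 h" using run_head_le Some c Suc.prems by fastforce
    then have "step p o1 c = step p o2 c"
      using c by (auto simp: step_def; cases "p ! pc"; auto)
    then show ?thesis using Some IH by simp
  qed
qed

lemma halts_lt_cong_oracle:
  assumes "\<And>h. h < s \<Longrightarrow> o1 h = o2 h"
  shows "halts_lt e o1 x s = halts_lt e o2 x s"
proof -
  have "run (prog e) o1 x k = run (prog e) o2 x k" if "k < s" for k
    using assms that by (intro run_cong_oracle) simp
  then show ?thesis unfolding halts_lt_def by auto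
qed

lemma halts_fin_take_prefix:
  assumes "is_prefix_of s Z"
  shows "halts_fin m (take t s) x = halts_inf m Z (min t (length s)) x"
  unfolding halts_fin_def halts_inf_def length_take min.commute[of "length s" t]
  using assms by (intro halts_lt_cong_oracle) (auto simp: fin_oracle_def inf_oracle_def is_prefix_of_def)

lemma tseq_Suc_gt: "tseq P n < tseq P (Suc n)"
  by auto

lemma Least_le_tseq: "\<exists>t. P m t \<Longrightarrow> (LEAST t. P m t) \<le> tseq P (Suc m)"
  by simp

declare tseq.simps(2) [simp del]

lemma tseq_strict_mono: "strict_mono (tseq P)"
  unfolding strict_mono_Suc_iff using tseq_Suc_gt by blast

lemma tseq_gt: "n < tseq P n"
  by (induction n) (auto intro: le_less_trans[OF _ tseq_Suc_gt])

lemma Least_min_truncate: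
  fixes P :: "nat \<Rightarrow> bool"
  assumes "\<exists>t. P t \<Longrightarrow> (LEAST t. P t) \<le> L"
  shows "(\<exists>t. P (min t L)) = (\<exists>t. P t) \<and> (LEAST t. P (min t L)) = (LEAST t. P t)"
proof (cases "\<exists>t. P t")
  case True
  define t0 where "t0 = (LEAST t. P t)"
  have "P (min t0 L)" using True assms by (simp add: t0_def min_absorb1 LeastI_ex)
  moreover have "\<not> P (min t L)" if "t < t0" for t
    using that not_less_Least unfolding t0_def by (metis min.strict_coboundedI1)
  ultimately have "(LEAST t. P (min t L)) = t0"
    by (metis Least_equality not_le)
  then show ?thesis using True \<open>P (min t0 L)\<close> t0_def by blast
qed auto

lemma tseq_fin_eq_tseq_inf:
  assumes "is_prefix_of s Z" and "tseq_inf Z n \<le> length s"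
  shows "tseq_fin s n = tseq_inf Z n"
  using assms(2)
proof (induction n)
  case 0
  then show ?case by simp
next
  case (Suc n)
  have IH: "tseq_fin s n = tseq_inf Z n"
    by (rule Suc.IH[OF order_trans[OF less_imp_le[OF tseq_Suc_gt] Suc.prems]])
  have "(\<exists>t. halts_inf n Z t n) \<Longrightarrow> (LEAST t. halts_inf n Z t n) \<le> length s"
    by (rule order_trans[OF Least_le_tseq Suc.prems])
  note cut = Least_min_truncate[OF this]
  show ?case
    unfolding tseq.simps(2) IH by (simp only: halts_fin_take_prefix[OF assms(1)] cut)
qed

lemma tS_eq_tZ: "is_prefix_of s Z \<Longrightarrow> tZ Z n \<le> length s \<Longrightarrow> tS s n = tZ Z n"
  unfolding tS_def tZ_def by (rule tseq_fin_eq_tseq_inf)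

lemma take_prefix_eq_init_seg: "is_prefix_of s Z \<Longrightarrow> t \<le> length s \<Longrightarrow> take t s = init_seg Z t"
  by (auto simp: init_seg_def is_prefix_of_def intro!: nth_equalityI)

lemma is_prefix_of_init_seg: "is_prefix_of (init_seg Z n) Z"
  by (simp add: init_seg_def is_prefix_of_def)

lemma length_init_seg [simp]: "length (init_seg Z n) = n"
  by (simp add: init_seg_def)

lemma init_seg_JJ: "init_seg (JJ Z) n = map (\<lambda>i. str_code (init_seg Z (tZ Z i))) [0..<n]"
  by (simp add: init_seg_def JJ_def)

lemma Jfin_eq_map:
  assumes "\<And>i. i < n \<Longrightarrow> tS s i \<le> length s" and "length s < tS s n"
  shows "Jfin s = map (\<lambda>i. str_code (take (tS s i) s)) [0..<n]"
proof -
  have "(LEAST k. length s < tS s k) = n"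
    using assms by (intro Least_equality) (auto simp: not_less[symmetric])
  then show ?thesis by (simp add: Jfin_def)
qed

lemma length_Jfin: "length (Jfin s) = (LEAST k. length s < tS s k)"
  by (simp add: Jfin_def Let_def)

lemma nth_Jfin: "i < length (Jfin s) \<Longrightarrow> Jfin s ! i = str_code (take (tS s i) s)"
  by (simp add: Jfin_def Let_def)

lemma tS_le_length_Jfin: "i < length (Jfin s) \<Longrightarrow> tS s i \<le> length s"
  unfolding length_Jfin using not_less_Least by (metis not_le)

lemma Jfin_init_seg_tseq_inf:
  "Jfin (init_seg Z (tseq_inf Z n)) = init_seg (JJ Z) n"
proof -
  define s where "s = init_seg Z (tseq_inf Z n)"
  have pre: "is_prefix_of s Z" unfolding s_def by (rule is_prefix_of_init_seg)
  have len: "length s = tseq_inf Z n" by (simp add: s_def)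
  have tS_i: "tS s i = tZ Z i" and tZ_le: "tZ Z i \<le> length s" if "i < n" for i
  proof -
    show "tZ Z i \<le> length s"
      unfolding len tZ_def using that by (simp add: strict_mono_less_eq[OF tseq_strict_mono])
    then show "tS s i = tZ Z i" by (rule tS_eq_tZ[OF pre])
  qed
  have "tseq_fin s n = length s"
    using tseq_fin_eq_tseq_inf[OF pre] len by simp
  then have "length s < tS s n"
    unfolding tS_def using tseq_Suc_gt by (rule subst)
  then have "Jfin s = map (\<lambda>i. str_code (take (tS s i) s)) [0..<n]"
    using tZ_le tS_i by (intro Jfin_eq_map) simp_all
  also have "\<dots> = map (\<lambda>i. str_code (init_seg Z (tZ Z i))) [0..<n]"
    using tS_i tZ_le take_prefix_eq_init_seg[OF pre] by (intro map_cong) simp_all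
  also have "\<dots> = init_seg (JJ Z) n"
    by (rule init_seg_JJ[symmetric])
  finally show ?thesis unfolding s_def .
qed

lemma JJ_eq_nth_Jfin:
  assumes pre: "is_prefix_of s Z" and "tZ Z m \<le> length s" and m: "m < length (Jfin s)"
  shows "JJ Z m = Jfin s ! m"
proof -
  have "tS s m = tZ Z m" using tS_eq_tZ[OF pre] assms(2) .
  moreover have "tS s m \<le> length s" using m by (rule tS_le_length_Jfin)
  ultimately show ?thesis
    by (simp add: nth_Jfin[OF m] JJ_def take_prefix_eq_init_seg[OF pre])
qed

theorem lemma4p5:
  fixes Y Z :: "nat \<Rightarrow> nat"
  shows "Y = JJ Z \<longleftrightarrow>
         (\<forall>n. \<exists>\<sigma>. is_prefix_of \<sigma> Z \<and> length \<sigma> > n \<and> init_seg Y n = Jfin \<sigma>)"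
proof
  assume Y: "Y = JJ Z"
  show "\<forall>n. \<exists>\<sigma>. is_prefix_of \<sigma> Z \<and> length \<sigma> > n \<and> init_seg Y n = Jfin \<sigma>"
  proof
    fix n
    show "\<exists>\<sigma>. is_prefix_of \<sigma> Z \<and> length \<sigma> > n \<and> init_seg Y n = Jfin \<sigma>"
      using is_prefix_of_init_seg tseq_gt Jfin_init_seg_tseq_inf Y
      by (intro exI[of _ "init_seg Z (tseq_inf Z n)"]) simp
  qed
next
  assume H: "\<forall>n. \<exists>\<sigma>. is_prefix_of \<sigma> Z \<and> length \<sigma> > n \<and> init_seg Y n = Jfin \<sigma>"
  show "Y = JJ Z"
  proof
    fix m
    obtain s where pre: "is_prefix_of s Z" and long: "tZ Z m < length s"
      and J: "init_seg Y (tZ Z m) = Jfin s"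
      using H by blast
    have m_lt: "m < tZ Z m" unfolding tZ_def using tseq_gt[of "Suc m"] Suc_lessD by blast
    then have "Y m = Jfin s ! m" by (simp flip: J add: init_seg_def)
    also have "\<dots> = JJ Z m"
      using JJ_eq_nth_Jfin[OF pre less_imp_le[OF long]] m_lt J[symmetric] by simp
    finally show "Y m = JJ Z m" .
  qed
qed

end
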